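(* Let $n,m\ge1$, let $p_{n,m}$ be stable of degree $n$ in $z$ and $m$ in $w$, and let $L$ and $a_0,\dots,a_{m-1}$ be as defined in the context. In $L^2\!\left(\frac{d\sigma}{|p_{n,m}|^2}\right)$, for each $0\le k\le m-1$ the polynomial $a_k$ is orthogonal to every monomial in $$\mathcal{O}_k=\{z^iw^j: i>n,\ j<0\}\cup\{z^iw^j:0\le j<m,\ j\ne k\}\cup\{z^iw^j: i<n,\ j\ge m\}\cup\{z^iw^k: i\ne n\}$$ (all $i,j\in\mathbb{Z}$), and for every $\eta\in\mathbb{C}$ the polynomial $L(\cdot,\cdot;\eta)$ is orthogonal to every monomial in $$\mathcal{O}=\{z^iw^j: i>n,\ j<0\}\cup\{z^iw^j: i\ne n,\ 0\le j<m\}\cup\{z^iw^j: i<n,\ j\ge m\}.$$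
   Context: $\sigma$ is normalized Lebesgue measure on $\mathbb{T}^2$; a polynomial $p\in\mathbb{C}[z,w]$ is stable if it has no zeros in $\{|z|\le1,|w|\le1\}$. Inner products are $\langle f,g\rangle=\int_{\mathbb{T}^2}f\bar g\,\frac{d\sigma}{|p_{n,m}|^2}$. Set $\tilde p_{n,m}(z,w)=z^nw^m\overline{p_{n,m}(1/\bar z,1/\bar w)}$ and $$L(z,w;\eta)=z^n\,\frac{p_{n,m}(z,w)\overline{p_{n,m}(1/\bar z,\eta)}-\tilde p_{n,m}(z,w)\overline{\tilde p_{n,m}(1/\bar z,\eta)}}{1-w\bar\eta},$$ which is a polynomial in $(z,w,\bar\eta)$ of degree at most $m-1$ in $\bar\eta$; the polynomials $a_j(z,w)$ are defined by $L(z,w;\eta)=\sum_{j=0}^{m-1}a_j(z,w)\bar\eta^j$. *)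

theory Defs
  imports "HOL-Analysis.Analysis"
begin

text \<open>A bivariate complex polynomial is represented by its (finitely supported)
  coefficient function: c i j is the coefficient of z^i w^j.\<close>

definition bpoly_eval :: "(nat \<Rightarrow> nat \<Rightarrow> complex) \<Rightarrow> complex \<Rightarrow> complex \<Rightarrow> complex" where
  "bpoly_eval c z w = (\<Sum>(i,j)\<in>{(i,j). c i j \<noteq> 0}. c i j * z ^ i * w ^ j)"

definition has_bidegree :: "(nat \<Rightarrow> nat \<Rightarrow> complex) \<Rightarrow> nat \<Rightarrow> nat \<Rightarrow> bool" where
  "has_bidegree c n m \<longleftrightarrow>
     (\<forall>i j. c i j \<noteq> 0 \<longrightarrow> i \<le> n \<and> j \<le> m) \<and> (\<exists>j. c n j \<noteq> 0) \<and> (\<exists>i. c i m \<noteq> 0)"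

definition stable :: "(nat \<Rightarrow> nat \<Rightarrow> complex) \<Rightarrow> bool" where
  "stable c \<longleftrightarrow> (\<forall>z w. cmod z \<le> 1 \<longrightarrow> cmod w \<le> 1 \<longrightarrow> bpoly_eval c z w \<noteq> 0)"

text \<open>reflection: coefficients of z^n w^m conj(p(1/conj z, 1/conj w))\<close>
definition reflect :: "nat \<Rightarrow> nat \<Rightarrow> (nat \<Rightarrow> nat \<Rightarrow> complex) \<Rightarrow> (nat \<Rightarrow> nat \<Rightarrow> complex)" where
  "reflect n m c = (\<lambda>i j. if i \<le> n \<and> j \<le> m then cnj (c (n - i) (m - j)) else 0)"

text \<open>inner product of L^2(d sigma / |p|^2) on the torus, sigma normalized Lebesgue measure\<close>
definition torus_inner ::
  "(nat \<Rightarrow> nat \<Rightarrow> complex) \<Rightarrow> (complex \<Rightarrow> complex \<Rightarrow> complex) \<Rightarrow> (complex \<Rightarrow> complex \<Rightarrow> complex) \<Rightarrow> complex" where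
  "torus_inner c f g =
     (LINT x:{0..2*pi}\<times>{0..2*pi}|lborel.
        f (cis (fst x)) (cis (snd x)) * cnj (g (cis (fst x)) (cis (snd x)))
          / complex_of_real ((cmod (bpoly_eval c (cis (fst x)) (cis (snd x)))) ^ 2))
     / complex_of_real (4 * pi ^ 2)"

definition monomial :: "int \<Rightarrow> int \<Rightarrow> complex \<Rightarrow> complex \<Rightarrow> complex" where
  "monomial i j z w = z powi i * w powi j"

end

(*
  On the torus 1/cnj z = z and the reflection of p equals z^n w^m cnj p.  Comparing
  coefficients of cnj eta in the identity defining L therefore expresses a_k on the torus
  through the w-coefficients p_l(z) = sum_i c i l z^i of p, and after division by |p|^2
  the integrand of <a_k, z^i w^j> becomes a sum of terms z^alpha w^beta p_l(z) / p(z,w)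
  and of their conjugates.  As 1/p is holomorphic near the closed bidisk, Cauchy's theorem
  in one variable and Fubini make the torus integral of such a term vanish whenever
  alpha > 0 or beta > 0; and since sum_l w^l p_l(z) = p(z,w), the terms with exponents
  (alpha, beta + l), summed over l, add up to z^alpha w^beta, whose torus integral vanishes
  unless alpha = beta = 0.  The index sets in the theorem are exactly those for which all
  terms are killed by one of these two facts.
*)

theory Submission
  imports Defs "HOL-Complex_Analysis.Cauchy_Integral_Theorem" "HOL-Computational_Algebra.Polynomial"
begin

lemma cnj_eq_inverse_if_norm_1: "cmod z = 1 \<Longrightarrow> cnj z = inverse z"
  using divide_conv_cnj[of z 1] by (simp add: inverse_eq_divide)

lemma circle_integral_holomorphic_eq_0:
  assumes hol: "f holomorphic_on cball 0 1" and "0 < k"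
  shows "((\<lambda>s. cis s ^ k * f (cis s)) has_integral 0) {0..2*pi}"
proof -
  obtain j where k: "k = Suc j" using \<open>0 < k\<close> gr0_conv_Suc by blast
  have "((\<lambda>z. z ^ j * f z) has_contour_integral 0) (circlepath 0 1)"
    by (rule Cauchy_theorem_convex_simple[of _ "cball 0 1"])
      (auto intro!: holomorphic_intros hol)
  then have "((\<lambda>s. cis s ^ j * f (cis s) * 1 * \<i> * cis s) has_integral 0) {0..2*pi}"
    unfolding circlepath_def by (subst (asm) has_contour_integral_part_circlepath_iff) simp_all
  then have "((\<lambda>s. - \<i> * (cis s ^ j * f (cis s) * 1 * \<i> * cis s)) has_integral - \<i> * 0) {0..2*pi}"
    by (rule has_integral_mult_right)
  then show ?thesis by (simp add: k mult_ac)
qed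

definition torus_integral :: "(complex \<Rightarrow> complex \<Rightarrow> complex) \<Rightarrow> complex" where
  "torus_integral F = integral (cbox (0, 0) (2*pi, 2*pi)) (\<lambda>x. F (cis (fst x)) (cis (snd x)))"

lemma continuous_on_torus_param:
  assumes "continuous_on (sphere 0 1 \<times> sphere 0 1) (\<lambda>p. F (fst p) (snd p))"
  shows "continuous_on S (\<lambda>x. F (cis (fst x)) (cis (snd x)))"
proof -
  have "continuous_on S (\<lambda>x. (cis (fst x), cis (snd x)))"
    by (intro continuous_intros)
  moreover have "(\<lambda>x. (cis (fst x), cis (snd x))) ` S \<subseteq> sphere 0 1 \<times> sphere 0 1"
    by (simp add: image_subset_iff)
  ultimately have "continuous_on S (\<lambda>x. (\<lambda>p. F (fst p) (snd p)) (cis (fst x), cis (snd x)))"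
    by (rule continuous_on_compose2[OF assms])
  then show ?thesis by simp
qed

lemma torus_integral_cong:
  assumes "\<And>u v. cmod u = 1 \<Longrightarrow> cmod v = 1 \<Longrightarrow> F u v = G u v"
  shows "torus_integral F = torus_integral G"
  unfolding torus_integral_def using assms by (intro integral_cong) simp

lemma torus_integral_cnj: "torus_integral (\<lambda>u v. cnj (F u v)) = cnj (torus_integral F)"
  by (simp add: torus_integral_def integral_cnj)

lemma torus_integral_swap:
  assumes "continuous_on (sphere 0 1 \<times> sphere 0 1) (\<lambda>p. F (fst p) (snd p))"
  shows "torus_integral (\<lambda>u v. F v u) = torus_integral F"
proof -
  have "continuous_on (cbox (0, 0) (2*pi, 2*pi)) (\<lambda>(s, t). F (cis s) (cis t))"
    using continuous_on_torus_param[OF assms] by (simp add: case_prod_beta')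
  from integral_swap_2dim[OF this] show ?thesis
    by (simp add: torus_integral_def case_prod_beta')
qed

lemma torus_integral_sum:
  assumes "finite K"
    and "\<And>k. k \<in> K \<Longrightarrow> continuous_on (sphere 0 1 \<times> sphere 0 1) (\<lambda>p. F k (fst p) (snd p))"
  shows "torus_integral (\<lambda>u v. \<Sum>k\<in>K. F k u v) = (\<Sum>k\<in>K. torus_integral (F k))"
  unfolding torus_integral_def
  by (intro integral_sum assms integrable_continuous continuous_on_torus_param)

lemma torus_integral_diff:
  assumes "continuous_on (sphere 0 1 \<times> sphere 0 1) (\<lambda>p. F (fst p) (snd p))"
    and "continuous_on (sphere 0 1 \<times> sphere 0 1) (\<lambda>p. G (fst p) (snd p))"
  shows "torus_integral (\<lambda>u v. F u v - G u v) = torus_integral F - torus_integral G"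
  unfolding torus_integral_def
  by (intro integral_diff assms integrable_continuous continuous_on_torus_param)

lemma torus_integral_holomorphic_snd_eq_0:
  assumes cont: "continuous_on (sphere 0 1 \<times> sphere 0 1) (\<lambda>p. F (fst p) (snd p))"
    and hol: "\<And>u. cmod u = 1 \<Longrightarrow> (\<lambda>v. F u v) holomorphic_on cball 0 1"
    and "0 < \<beta>"
  shows "torus_integral (\<lambda>u v. u powi \<alpha> * v powi \<beta> * F u v) = 0"
proof -
  obtain b where \<beta>: "\<beta> = int b" and "0 < b"
    using \<open>0 < \<beta>\<close> by (metis pos_int_cases)
  have "continuous_on (cbox (0, 0) (2*pi, 2*pi))
          (\<lambda>x. cis (fst x) powi \<alpha> * cis (snd x) powi \<beta> * F (cis (fst x)) (cis (snd x)))"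
    by (rule continuous_on_torus_param) (auto intro!: continuous_intros cont)
  then have "torus_integral (\<lambda>u v. u powi \<alpha> * v powi \<beta> * F u v)
      = integral {0..2*pi} (\<lambda>s. cis s powi \<alpha> * integral {0..2*pi} (\<lambda>t. cis t ^ b * F (cis s) (cis t)))"
    unfolding torus_integral_def by (simp add: integral_prod_continuous mult.assoc \<beta>)
  also have "\<dots> = 0"
  proof -
    have "integral {0..2*pi} (\<lambda>t. cis t ^ b * F (cis s) (cis t)) = 0" for s
      by (rule integral_unique[OF circle_integral_holomorphic_eq_0[OF hol[OF norm_cis] \<open>0 < b\<close>]])
    then show ?thesis by simp
  qed
  finally show ?thesis .
qed

lemma torus_integral_holomorphic_eq_0:
  assumes cont: "continuous_on (sphere 0 1 \<times> sphere 0 1) (\<lambda>p. F (fst p) (snd p))"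
    and hol_fst: "\<And>v. cmod v = 1 \<Longrightarrow> (\<lambda>u. F u v) holomorphic_on cball 0 1"
    and hol_snd: "\<And>u. cmod u = 1 \<Longrightarrow> (\<lambda>v. F u v) holomorphic_on cball 0 1"
    and "0 < \<alpha> \<or> 0 < \<beta>"
  shows "torus_integral (\<lambda>u v. u powi \<alpha> * v powi \<beta> * F u v) = 0"
  using \<open>0 < \<alpha> \<or> 0 < \<beta>\<close>
proof
  assume "0 < \<alpha>"
  have "continuous_on (sphere 0 1 \<times> sphere 0 1) (\<lambda>p. (\<lambda>q. F (fst q) (snd q)) (snd p, fst p))"
    by (rule continuous_on_compose2[OF cont]) (auto intro!: continuous_intros)
  then have cont_swap: "continuous_on (sphere 0 1 \<times> sphere 0 1) (\<lambda>p. F (snd p) (fst p))"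
    by simp
  have "continuous_on (sphere 0 1 \<times> sphere 0 1) (\<lambda>p. fst p powi \<beta> * snd p powi \<alpha> * F (snd p) (fst p))"
    by (auto intro!: continuous_intros cont_swap)
  from torus_integral_swap[OF this]
  have "torus_integral (\<lambda>u v. u powi \<alpha> * v powi \<beta> * F u v)
      = torus_integral (\<lambda>u v. u powi \<beta> * v powi \<alpha> * F v u)"
    by (simp add: ac_simps)
  also have "\<dots> = 0"
    by (rule torus_integral_holomorphic_snd_eq_0[OF cont_swap hol_fst \<open>0 < \<alpha>\<close>])
  finally show ?thesis .
qed (rule torus_integral_holomorphic_snd_eq_0[OF cont hol_snd])

lemma torus_integral_monomial_eq_0:
  assumes "\<alpha> \<noteq> 0 \<or> \<beta> \<noteq> 0"
  shows "torus_integral (\<lambda>u v. u powi \<alpha> * v powi \<beta>) = 0"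
proof (cases "0 < \<alpha> \<or> 0 < \<beta>")
  case True
  then show ?thesis
    using torus_integral_holomorphic_eq_0[of "\<lambda>u v. 1"] by simp
next
  case False
  then have "0 < - \<alpha> \<or> 0 < - \<beta>" using assms by linarith
  then have "torus_integral (\<lambda>u v. u powi - \<alpha> * v powi - \<beta>) = 0"
    using torus_integral_holomorphic_eq_0[of "\<lambda>u v. 1"] by simp
  moreover have "torus_integral (\<lambda>u v. u powi \<alpha> * v powi \<beta>)
      = cnj (torus_integral (\<lambda>u v. u powi - \<alpha> * v powi - \<beta>))"
    unfolding torus_integral_cnj[symmetric]
    by (rule torus_integral_cong) (simp add: cnj_eq_inverse_if_norm_1 power_int_minus power_int_inverse)
  ultimately show ?thesis by simp
qed

lemma torus_inner_eq_torus_integral: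
  assumes cont: "continuous_on (sphere 0 1 \<times> sphere 0 1) (\<lambda>p. G (fst p) (snd p))"
    and eq: "\<And>u v. cmod u = 1 \<Longrightarrow> cmod v = 1 \<Longrightarrow>
               f u v * cnj (g u v) / complex_of_real ((cmod (bpoly_eval c u v))\<^sup>2) = G u v"
  shows "torus_inner c f g = torus_integral G / complex_of_real (4 * pi\<^sup>2)"
proof -
  have box: "{0..2*pi} \<times> {0..2*pi} = cbox (0, 0) (2*pi, 2*pi::real)"
    by (simp add: cbox_Pair_eq)
  have cont_param: "continuous_on (cbox (0, 0) (2*pi, 2*pi)) (\<lambda>x. G (cis (fst x)) (cis (snd x)))"
    by (rule continuous_on_torus_param[OF cont])
  have "set_integrable lborel (cbox (0, 0) (2*pi, 2*pi)) (\<lambda>x. G (cis (fst x)) (cis (snd x)))"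
    unfolding set_integrable_def by (rule borel_integrable_compact[OF compact_cbox cont_param])
  then have "(LINT x:cbox (0, 0) (2*pi, 2*pi)|lborel. G (cis (fst x)) (cis (snd x))) = torus_integral G"
    unfolding torus_integral_def by (rule set_borel_integral_eq_integral)
  then show ?thesis
    unfolding torus_inner_def box using eq
    by (subst set_lebesgue_integral_cong[where g = "\<lambda>x. G (cis (fst x)) (cis (snd x))"]) auto
qed

definition wcoeff :: "nat \<Rightarrow> (nat \<Rightarrow> nat \<Rightarrow> complex) \<Rightarrow> nat \<Rightarrow> complex \<Rightarrow> complex" where
  "wcoeff n c j z = (\<Sum>i\<le>n. c i j * z ^ i)"

lemma continuous_on_bpoly_eval [continuous_intros]:
  "continuous_on S f \<Longrightarrow> continuous_on S g \<Longrightarrow> continuous_on S (\<lambda>x. bpoly_eval c (f x) (g x))"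
  unfolding bpoly_eval_def case_prod_beta by (intro continuous_intros)

lemma holomorphic_on_bpoly_eval [holomorphic_intros]:
  "f holomorphic_on S \<Longrightarrow> g holomorphic_on S \<Longrightarrow> (\<lambda>x. bpoly_eval c (f x) (g x)) holomorphic_on S"
  unfolding bpoly_eval_def case_prod_beta by (intro holomorphic_intros)

lemma continuous_on_wcoeff [continuous_intros]:
  "continuous_on S f \<Longrightarrow> continuous_on S (\<lambda>x. wcoeff n c j (f x))"
  unfolding wcoeff_def by (intro continuous_intros)

lemma holomorphic_on_wcoeff [holomorphic_intros]:
  "f holomorphic_on S \<Longrightarrow> (\<lambda>x. wcoeff n c j (f x)) holomorphic_on S"
  unfolding wcoeff_def by (intro holomorphic_intros)

lemma bpoly_eval_eq_wcoeff_sum: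
  assumes supp: "\<And>i j. c i j \<noteq> 0 \<Longrightarrow> i \<le> n \<and> j \<le> m"
  shows "bpoly_eval c z w = (\<Sum>j\<le>m. wcoeff n c j z * w ^ j)"
proof -
  have "bpoly_eval c z w = (\<Sum>(i, j)\<in>{..n} \<times> {..m}. c i j * z ^ i * w ^ j)"
    unfolding bpoly_eval_def by (rule sum.mono_neutral_left) (auto dest: supp)
  also have "\<dots> = (\<Sum>j\<le>m. wcoeff n c j z * w ^ j)"
    by (simp add: sum.cartesian_product[symmetric] sum.swap[of _ "{..n}"] wcoeff_def sum_distrib_right)
  finally show ?thesis .
qed

lemma reflect_support: "reflect n m c i j \<noteq> 0 \<Longrightarrow> i \<le> n \<and> j \<le> m"
  by (simp add: reflect_def split: if_splits)

lemma sum_atMost_reverse_powers: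
  fixes x :: "nat \<Rightarrow> 'a::field"
  assumes "v \<noteq> 0"
  shows "(\<Sum>j\<le>m. x (m - j) * v ^ j) = v ^ m * (\<Sum>j\<le>m. x j * inverse v ^ j)"
proof -
  have "(\<Sum>j\<le>m. x (m - j) * v ^ j) = (\<Sum>j\<le>m. x j * v ^ (m - j))"
    by (rule sum.reindex_bij_witness[where i = "\<lambda>j. m - j" and j = "\<lambda>j. m - j"]) auto
  also have "\<dots> = v ^ m * (\<Sum>j\<le>m. x j * inverse v ^ j)"
    unfolding sum_distrib_left using \<open>v \<noteq> 0\<close>
    by (intro sum.cong refl) (simp add: power_diff power_inverse field_simps)
  finally show ?thesis .
qed

lemma wcoeff_reflect_on_circle:
  assumes "cmod u = 1" and "j \<le> m"
  shows "wcoeff n (reflect n m c) j u = u ^ n * cnj (wcoeff n c (m - j) u)"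
proof -
  have "wcoeff n (reflect n m c) j u = (\<Sum>i\<le>n. cnj (c (n - i) (m - j)) * u ^ i)"
    unfolding wcoeff_def reflect_def using \<open>j \<le> m\<close> by (intro sum.cong) auto
  also have "\<dots> = u ^ n * cnj (wcoeff n c (m - j) u)"
    using \<open>cmod u = 1\<close>
    by (subst sum_atMost_reverse_powers) (auto simp: wcoeff_def cnj_eq_inverse_if_norm_1)
  finally show ?thesis .
qed

lemma reflect_on_torus:
  assumes supp: "\<And>i j. c i j \<noteq> 0 \<Longrightarrow> i \<le> n \<and> j \<le> m"
    and "cmod u = 1" and "cmod v = 1"
  shows "bpoly_eval (reflect n m c) u v = u ^ n * v ^ m * cnj (bpoly_eval c u v)"
proof -
  have "bpoly_eval (reflect n m c) u v = (\<Sum>j\<le>m. u ^ n * cnj (wcoeff n c (m - j) u) * v ^ j)"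
    using assms by (simp add: bpoly_eval_eq_wcoeff_sum[OF reflect_support] wcoeff_reflect_on_circle)
  also have "\<dots> = u ^ n * v ^ m * cnj (bpoly_eval c u v)"
    using assms
    by (subst sum_atMost_reverse_powers[where x = "\<lambda>j. u ^ n * cnj (wcoeff n c j u)"])
      (auto simp: bpoly_eval_eq_wcoeff_sum[OF supp] cnj_eq_inverse_if_norm_1 sum_distrib_left mult_ac)
  finally show ?thesis .
qed

lemma coeffs_of_quotient_by_linear:
  fixes A D :: "nat \<Rightarrow> 'a::field_char_0"
  assumes eq: "\<And>e. w * e \<noteq> 1 \<Longrightarrow> (\<Sum>k<m. A k * e ^ k) = (\<Sum>j\<le>m. D j * e ^ j) / (1 - w * e)"
    and "k < m"
  shows "A k = (\<Sum>l\<le>k. w ^ (k - l) * D l)"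
proof -
  define q where "q = (\<Sum>k<m. monom (A k) k)"
  define d where "d = (\<Sum>j\<le>m. monom (D j) j)"
  have "{e. w * e = 1} \<subseteq> {inverse w}"
    using inverse_unique by blast
  then have "infinite (UNIV - {e. w * e = 1})"
    by (intro Diff_infinite_finite infinite_UNIV_char_0) (auto dest: finite_subset)
  moreover have "UNIV - {e. w * e = 1} \<subseteq> {e. poly ([:1, - w:] * q - d) e = 0}"
  proof
    fix e assume "e \<in> UNIV - {e. w * e = 1}"
    then have "w * e \<noteq> 1" by simp
    define S T where "S = (\<Sum>k<m. A k * e ^ k)" and "T = (\<Sum>j\<le>m. D j * e ^ j)"
    have "S = T / (1 - w * e)"
      using eq[OF \<open>w * e \<noteq> 1\<close>] by (simp only: S_def T_def)
    then have "S * (1 - w * e) = T"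
      using \<open>w * e \<noteq> 1\<close> by simp
    then have "S - e * (w * S) = T"
      by (simp add: algebra_simps)
    then show "e \<in> {e. poly ([:1, - w:] * q - d) e = 0}"
      by (simp add: q_def d_def poly_sum poly_monom S_def T_def mult.commute)
  qed
  ultimately have "infinite {e. poly ([:1, - w:] * q - d) e = 0}"
    by (rule infinite_super[rotated])
  then have qd: "[:1, - w:] * q = d"
    using poly_roots_finite[of "[:1, - w:] * q - d"] by auto
  have coeff_q: "coeff q j = (if j < m then A j else 0)" for j
    by (simp add: q_def coeff_sum coeff_monom)
  have coeff_d: "coeff d j = (if j \<le> m then D j else 0)" for j
    by (simp add: d_def coeff_sum coeff_monom)
  have coeff_lhs: "coeff ([:1, - w:] * q) j = coeff q j - (case j of 0 \<Rightarrow> 0 | Suc i \<Rightarrow> w * coeff q i)" for j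
    by (simp add: mult_pCons_left coeff_pCons split: nat.split)
  from \<open>k < m\<close> show ?thesis
  proof (induction k)
    case 0
    then show ?case using coeff_lhs[of 0] unfolding qd by (simp add: coeff_q coeff_d)
  next
    case (Suc k)
    have "A (Suc k) = w * A k + D (Suc k)"
      using coeff_lhs[of "Suc k"] Suc.prems unfolding qd by (simp add: coeff_q coeff_d)
    also have "\<dots> = (\<Sum>l\<le>Suc k. w ^ (Suc k - l) * D l)"
      using Suc by (simp add: sum_distrib_left Suc_diff_le mult.assoc)
    finally show ?case .
  qed
qed

lemma kernel_term_on_torus:
  fixes u v P W W' :: complex
  assumes u: "cmod u = 1" and v: "cmod v = 1" and "P \<noteq> 0" and "l \<le> k"
  shows "v ^ (k - l) * (u ^ n * (P * cnj W - v ^ m * cnj P * W')) * cnj (u powi a * v powi b)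
           / complex_of_real ((cmod P)\<^sup>2)
       = cnj (u powi (a - int n) * v powi (b + int l - int k) * (W / P))
         - u powi (int n - a) * v powi (int m + int k - int l - b) * (W' / P)"
proof -
  have "u \<noteq> 0" "v \<noteq> 0" using u v by auto
  have Ua: "cmod (u powi a) = 1" and Vb: "cmod (v powi b) = 1"
    using u v by (simp_all add: norm_power_int)
  have "u powi a \<noteq> 0" "v powi b \<noteq> 0" "cnj P \<noteq> 0"
    using \<open>u \<noteq> 0\<close> \<open>v \<noteq> 0\<close> \<open>P \<noteq> 0\<close> by simp_all
  have exponents:
    "u powi (a - int n) = u powi a / u ^ n"
    "v powi (b + int l - int k) = v powi b * v ^ l / v ^ k"
    "u powi (int n - a) = u ^ n / u powi a"
    "v powi (int m + int k - int l - b) = v ^ m * v ^ k / v ^ l / v powi b"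
    "v ^ (k - l) = v ^ k / v ^ l"
    using \<open>u \<noteq> 0\<close> \<open>v \<noteq> 0\<close> \<open>l \<le> k\<close>
    by (simp_all add: power_int_diff power_int_add power_diff)
  show ?thesis
    unfolding exponents complex_norm_square
    using \<open>u \<noteq> 0\<close> \<open>v \<noteq> 0\<close> \<open>u powi a \<noteq> 0\<close> \<open>v powi b \<noteq> 0\<close> \<open>P \<noteq> 0\<close> \<open>cnj P \<noteq> 0\<close>
    by (simp add: cnj_eq_inverse_if_norm_1[OF u] cnj_eq_inverse_if_norm_1[OF v]
        cnj_eq_inverse_if_norm_1[OF Ua] cnj_eq_inverse_if_norm_1[OF Vb] field_simps)
qed

locale stable_bipoly =
  fixes n m :: nat and c :: "nat \<Rightarrow> nat \<Rightarrow> complex"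
  assumes support: "\<And>i j. c i j \<noteq> 0 \<Longrightarrow> i \<le> n \<and> j \<le> m"
    and stable: "stable c"
begin

abbreviation p :: "complex \<Rightarrow> complex \<Rightarrow> complex" where
  "p \<equiv> bpoly_eval c"

lemma p_eq_wcoeff_sum: "p z w = (\<Sum>j\<le>m. wcoeff n c j z * w ^ j)"
  by (rule bpoly_eval_eq_wcoeff_sum[of c n m, OF support])

lemma p_nonzero: "cmod z \<le> 1 \<Longrightarrow> cmod w \<le> 1 \<Longrightarrow> p z w \<noteq> 0"
  using stable unfolding stable_def by blast

definition moment :: "nat \<Rightarrow> int \<Rightarrow> int \<Rightarrow> complex" where
  "moment l \<alpha> \<beta> = torus_integral (\<lambda>u v. u powi \<alpha> * v powi \<beta> * (wcoeff n c l u / p u v))"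

lemma continuous_on_moment_integrand:
  "continuous_on (sphere 0 1 \<times> sphere 0 1)
     (\<lambda>q. fst q powi \<alpha> * snd q powi \<beta> * (wcoeff n c l (fst q) / p (fst q) (snd q)))"
  by (intro continuous_intros) (auto simp: p_nonzero)

lemma moment_eq_0: "0 < \<alpha> \<or> 0 < \<beta> \<Longrightarrow> moment l \<alpha> \<beta> = 0"
  unfolding moment_def
  by (rule torus_integral_holomorphic_eq_0)
    (auto simp: p_nonzero intro!: holomorphic_intros continuous_intros)

lemma sum_moment_eq_0:
  assumes "\<alpha> \<noteq> 0 \<or> \<beta> \<noteq> 0"
  shows "(\<Sum>l\<le>m. moment l \<alpha> (\<beta> + int l)) = 0"
proof -
  have "(\<Sum>l\<le>m. moment l \<alpha> (\<beta> + int l))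
      = torus_integral (\<lambda>u v. \<Sum>l\<le>m. u powi \<alpha> * v powi (\<beta> + int l) * (wcoeff n c l u / p u v))"
    unfolding moment_def by (intro torus_integral_sum[symmetric] finite_atMost continuous_on_moment_integrand)
  also have "\<dots> = torus_integral (\<lambda>u v. u powi \<alpha> * v powi \<beta>)"
  proof (rule torus_integral_cong)
    fix u v :: complex assume "cmod u = 1" "cmod v = 1"
    then have "v \<noteq> 0" "p u v \<noteq> 0" by (auto simp: p_nonzero)
    then show "(\<Sum>l\<le>m. u powi \<alpha> * v powi (\<beta> + int l) * (wcoeff n c l u / p u v)) = u powi \<alpha> * v powi \<beta>"
      by (simp add: power_int_add p_eq_wcoeff_sum sum_distrib_left[symmetric]
          sum_divide_distrib[symmetric] mult_ac)
  qed
  also have "\<dots> = 0"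
    by (rule torus_integral_monomial_eq_0[OF assms])
  finally show ?thesis .
qed

definition inner_integrand :: "nat \<Rightarrow> int \<Rightarrow> int \<Rightarrow> complex \<Rightarrow> complex \<Rightarrow> complex" where
  "inner_integrand k a b u v =
     (\<Sum>l\<le>k. cnj (u powi (a - int n) * v powi (b + int l - int k) * (wcoeff n c l u / p u v))
            - u powi (int n - a) * v powi (int m + int k - int l - b) * (wcoeff n c (m - l) u / p u v))"

lemma continuous_on_inner_integrand:
  "continuous_on (sphere 0 1 \<times> sphere 0 1) (\<lambda>q. inner_integrand k a b (fst q) (snd q))"
  unfolding inner_integrand_def by (intro continuous_intros) (auto simp: p_nonzero)

lemma torus_integral_inner_integrand:
  "torus_integral (inner_integrand k a b) =
     (\<Sum>l\<le>k. cnj (moment l (a - int n) (b + int l - int k))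
            - moment (m - l) (int n - a) (int m + int k - int l - b))"
proof -
  have "torus_integral (inner_integrand k a b) =
     (\<Sum>l\<le>k. torus_integral (\<lambda>u v.
         cnj (u powi (a - int n) * v powi (b + int l - int k) * (wcoeff n c l u / p u v))
         - u powi (int n - a) * v powi (int m + int k - int l - b) * (wcoeff n c (m - l) u / p u v)))"
    unfolding inner_integrand_def[abs_def]
    by (rule torus_integral_sum) (auto intro!: continuous_intros simp: p_nonzero)
  also have "\<dots> = (\<Sum>l\<le>k. cnj (moment l (a - int n) (b + int l - int k))
            - moment (m - l) (int n - a) (int m + int k - int l - b))"
    unfolding moment_def torus_integral_cnj[symmetric]
    by (intro sum.cong refl torus_integral_diff continuous_intros continuous_on_moment_integrand)
  finally show ?thesis .
qed

lemma torus_integral_inner_integrand_eq_0: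
  assumes "k \<le> m" and "a < int n \<or> b < int m"
    and "int n < a \<or> (0 \<le> b \<and> (a \<noteq> int n \<or> b \<noteq> int k))"
  shows "torus_integral (inner_integrand k a b) = 0"
proof -
  have reflected: "moment (m - l) (int n - a) (int m + int k - int l - b) = 0" if "l \<le> k" for l
    using assms(2) that by (intro moment_eq_0) linarith
  have direct: "(\<Sum>l\<le>k. moment l (a - int n) (b + int l - int k)) = 0"
  proof (cases "int n < a")
    case True
    then show ?thesis by (simp add: moment_eq_0)
  next
    case False
    with assms(3) have "0 \<le> b" and nonzero: "a - int n \<noteq> 0 \<or> b - int k \<noteq> 0" by auto
    have "(\<Sum>l\<le>k. moment l (a - int n) (b + int l - int k))
        = (\<Sum>l\<le>m. moment l (a - int n) (b - int k + int l))"
      using \<open>k \<le> m\<close> \<open>0 \<le> b\<close>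
      by (intro sum.mono_neutral_cong_left) (auto simp: moment_eq_0 algebra_simps)
    also have "\<dots> = 0"
      by (rule sum_moment_eq_0[OF nonzero])
    finally show ?thesis .
  qed
  show ?thesis
    using direct reflected by (simp add: torus_integral_inner_integrand sum_subtractf flip: cnj_sum)
qed

end

locale kernel_coefficients = stable_bipoly +
  fixes A :: "nat \<Rightarrow> complex \<Rightarrow> complex \<Rightarrow> complex"
  assumes generating: "\<And>z w \<eta>. z \<noteq> 0 \<Longrightarrow> w * cnj \<eta> \<noteq> 1 \<Longrightarrow>
      (\<Sum>k<m. A k z w * cnj \<eta> ^ k) =
      z ^ n * (p z w * cnj (p (1 / cnj z) \<eta>)
               - bpoly_eval (reflect n m c) z w * cnj (bpoly_eval (reflect n m c) (1 / cnj z) \<eta>))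
      / (1 - w * cnj \<eta>)"
begin

lemma kernel_coeff_on_torus:
  assumes u: "cmod u = 1" and v: "cmod v = 1" and "k < m"
  shows "A k u v = (\<Sum>l\<le>k. v ^ (k - l) *
           (u ^ n * (p u v * cnj (wcoeff n c l u) - v ^ m * cnj (p u v) * wcoeff n c (m - l) u)))"
proof -
  have "u \<noteq> 0" using u by auto
  have u_reflected: "1 / cnj u = u"
    by (simp add: cnj_eq_inverse_if_norm_1[OF u] divide_inverse)
  have unit_u: "u ^ n * cnj u ^ n = 1"
    using \<open>u \<noteq> 0\<close> by (simp add: cnj_eq_inverse_if_norm_1[OF u] power_inverse)
  define D where "D j = u ^ n * (p u v * cnj (wcoeff n c j u) - v ^ m * cnj (p u v) * wcoeff n c (m - j) u)" for j
  show ?thesis unfolding D_def[symmetric]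
  proof (rule coeffs_of_quotient_by_linear[OF _ \<open>k < m\<close>])
    fix e assume "v * e \<noteq> 1"
    let ?R = "bpoly_eval (reflect n m c)"
    have cnj_p: "cnj (p u (cnj e)) = (\<Sum>j\<le>m. cnj (wcoeff n c j u) * e ^ j)"
      by (simp add: p_eq_wcoeff_sum)
    have "cnj (?R u (cnj e)) = (\<Sum>j\<le>m. cnj (wcoeff n (reflect n m c) j u) * e ^ j)"
      by (simp add: bpoly_eval_eq_wcoeff_sum[of _ n m, OF reflect_support])
    also have "\<dots> = (\<Sum>j\<le>m. cnj u ^ n * (wcoeff n c (m - j) u * e ^ j))"
      by (intro sum.cong refl) (simp add: wcoeff_reflect_on_circle[OF u])
    finally have cnj_R: "cnj (?R u (cnj e)) = \<dots>" .
    have R_uv: "?R u v = u ^ n * v ^ m * cnj (p u v)"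
      using reflect_on_torus support u v by blast
    have "(\<Sum>k<m. A k u v * e ^ k) = u ^ n * (p u v * cnj (p u (cnj e)) - ?R u v * cnj (?R u (cnj e))) / (1 - v * e)"
      using generating[of u v "cnj e"] \<open>u \<noteq> 0\<close> \<open>v * e \<noteq> 1\<close> by (simp add: u_reflected)
    also have "u ^ n * (p u v * cnj (p u (cnj e)) - ?R u v * cnj (?R u (cnj e)))
        = (\<Sum>j\<le>m. u ^ n * (p u v * (cnj (wcoeff n c j u) * e ^ j))
                   - (u ^ n * cnj u ^ n) * (u ^ n * v ^ m * cnj (p u v) * (wcoeff n c (m - j) u * e ^ j)))"
      unfolding cnj_p cnj_R R_uv
      by (simp add: sum_distrib_left sum_subtractf right_diff_distrib mult_ac)
    also have "\<dots> = (\<Sum>j\<le>m. D j * e ^ j)"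
      unfolding unit_u D_def by (intro sum.cong refl) (simp add: algebra_simps)
    finally show "(\<Sum>k<m. A k u v * e ^ k) = (\<Sum>j\<le>m. D j * e ^ j) / (1 - v * e)" .
  qed
qed

lemma kernel_coeff_integrand_on_torus:
  assumes "cmod u = 1" and "cmod v = 1" and "k < m"
  shows "A k u v * cnj (monomial a b u v) / complex_of_real ((cmod (p u v))\<^sup>2) = inner_integrand k a b u v"
  unfolding kernel_coeff_on_torus[OF assms] monomial_def inner_integrand_def sum_distrib_right sum_divide_distrib
  by (intro sum.cong refl kernel_term_on_torus) (use assms in \<open>auto simp: p_nonzero\<close>)

lemma torus_inner_kernel_coeff_monomial_eq_0:
  assumes "k < m" and "a < int n \<or> b < int m"
    and "int n < a \<or> (0 \<le> b \<and> (a \<noteq> int n \<or> b \<noteq> int k))"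
  shows "torus_inner c (A k) (monomial a b) = 0"
proof -
  have "torus_inner c (A k) (monomial a b) = torus_integral (inner_integrand k a b) / complex_of_real (4 * pi\<^sup>2)"
    by (rule torus_inner_eq_torus_integral[OF continuous_on_inner_integrand kernel_coeff_integrand_on_torus])
      (use \<open>k < m\<close> in auto)
  also have "\<dots> = 0"
    using assms by (simp add: torus_integral_inner_integrand_eq_0)
  finally show ?thesis .
qed

lemma kernel_integrand_on_torus:
  assumes "cmod u = 1" and "cmod v = 1"
  shows "(\<Sum>k<m. A k u v * e ^ k) * cnj (monomial a b u v) / complex_of_real ((cmod (p u v))\<^sup>2)
       = (\<Sum>k<m. e ^ k * inner_integrand k a b u v)"
  unfolding sum_distrib_right sum_divide_distrib
  by (intro sum.cong refl) (subst kernel_coeff_integrand_on_torus[OF assms, symmetric], simp_all add: ac_simps)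

lemma torus_inner_kernel_monomial_eq_0:
  assumes "a < int n \<or> b < int m"
    and "\<And>k. k < m \<Longrightarrow> int n < a \<or> (0 \<le> b \<and> (a \<noteq> int n \<or> b \<noteq> int k))"
  shows "torus_inner c (\<lambda>u v. \<Sum>k<m. A k u v * e ^ k) (monomial a b) = 0"
proof -
  have "torus_inner c (\<lambda>u v. \<Sum>k<m. A k u v * e ^ k) (monomial a b)
      = torus_integral (\<lambda>u v. \<Sum>k<m. e ^ k * inner_integrand k a b u v) / complex_of_real (4 * pi\<^sup>2)"
    by (rule torus_inner_eq_torus_integral[OF _ kernel_integrand_on_torus])
      (intro continuous_intros continuous_on_inner_integrand)
  also have "\<dots> = (\<Sum>k<m. e ^ k * torus_integral (inner_integrand k a b)) / complex_of_real (4 * pi\<^sup>2)"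
    by (subst torus_integral_sum)
      (auto intro!: continuous_intros continuous_on_inner_integrand simp: torus_integral_def)
  also have "\<dots> = 0"
    using assms by (simp add: torus_integral_inner_integrand_eq_0)
  finally show ?thesis .
qed

end

theorem mainTheorem3:
  fixes n m :: nat
    and c :: "nat \<Rightarrow> nat \<Rightarrow> complex"
    and a :: "nat \<Rightarrow> nat \<Rightarrow> nat \<Rightarrow> complex"
  assumes "n \<ge> 1" and "m \<ge> 1"
    and "has_bidegree c n m"
    and "stable c"
    and "\<forall>k. finite {(i,j). a k i j \<noteq> 0}"
    and "\<forall>z w \<eta>. z \<noteq> 0 \<longrightarrow> w * cnj \<eta> \<noteq> 1 \<longrightarrow>
           (\<Sum>k<m. bpoly_eval (a k) z w * cnj \<eta> ^ k) =
           z ^ n * (bpoly_eval c z w * cnj (bpoly_eval c (1 / cnj z) \<eta>)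
                    - bpoly_eval (reflect n m c) z w * cnj (bpoly_eval (reflect n m c) (1 / cnj z) \<eta>))
           / (1 - w * cnj \<eta>)"
  shows "(\<forall>k<m. \<forall>i j :: int.
            ((i > int n \<and> j < 0) \<or> (0 \<le> j \<and> j < int m \<and> j \<noteq> int k)
             \<or> (i < int n \<and> j \<ge> int m) \<or> (j = int k \<and> i \<noteq> int n))
            \<longrightarrow> torus_inner c (bpoly_eval (a k)) (monomial i j) = 0)
       \<and> (\<forall>\<eta>::complex. \<forall>i j :: int.
            ((i > int n \<and> j < 0) \<or> (i \<noteq> int n \<and> 0 \<le> j \<and> j < int m)
             \<or> (i < int n \<and> j \<ge> int m))
            \<longrightarrow> torus_inner c (\<lambda>z w. \<Sum>k<m. bpoly_eval (a k) z w * cnj \<eta> ^ k) (monomial i j) = 0)"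
proof -
  \<comment> \<open>Only the values of the a k on the torus enter, and the identity for L fixes them,
    so n, m \<ge> 1 and the finiteness of the supports of the a k are not needed.\<close>
  interpret kernel_coefficients n m c "\<lambda>k. bpoly_eval (a k)"
    using assms(3,4,6) by unfold_locales (auto simp: has_bidegree_def)
  show ?thesis
  proof (intro conjI allI impI)
    fix k i j
    assume "k < m" and "(i > int n \<and> j < 0) \<or> (0 \<le> j \<and> j < int m \<and> j \<noteq> int k)
             \<or> (i < int n \<and> j \<ge> int m) \<or> (j = int k \<and> i \<noteq> int n)"
    then show "torus_inner c (bpoly_eval (a k)) (monomial i j) = 0"
      by (intro torus_inner_kernel_coeff_monomial_eq_0) auto
  next
    fix \<eta> i j
    assume "(i > int n \<and> j < 0) \<or> (i \<noteq> int n \<and> 0 \<le> j \<and> j < int m) \<or> (i < int n \<and> j \<ge> int m)"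
    then show "torus_inner c (\<lambda>z w. \<Sum>k<m. bpoly_eval (a k) z w * cnj \<eta> ^ k) (monomial i j) = 0"
      by (intro torus_inner_kernel_monomial_eq_0) auto
  qed
qed

end
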